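(* Let $\lambda,\sigma\in\mathbb{R}$, $x_0\ne0$, and let $B$ be a standard scalar Brownian motion. For $0<\Delta t<1$ let $t_n=n\Delta t$, $\Delta B_n=B(t_{n+1})-B(t_n)$, and let $\{X_n\}$ be the Milstein scheme for $dX=\lambda X\,dt+\sigma X\,dB$, $X(0)=x_0$, namely $X_0=x_0$ and $$X_n=X_{n-1}\Big[1+\lambda\Delta t+\sigma\Delta B_{n-1}+\tfrac{\sigma^2}{2}(\Delta B_{n-1}^2-\Delta t)\Big],\quad n\ge1.$$ Then there exist $0<\Delta t_2<1$ and $C_3,C_4>0$ such that for all $0<\Delta t<\Delta t_2$, $$\lambda+\tfrac{\sigma^2}{2}-C_3\Delta t\le\limsup_{n\to\infty}\frac1{t_n}\log\big[\mathbb E|X_n|^2\big]^{1/2}\le\lambda+\tfrac{\sigma^2}{2}+C_3\Delta t,$$ and almost surely $$\lambda-\tfrac{\sigma^2}{2}-C_4\Delta t^{1/2}\le\limsup_{n\to\infty}\frac1{t_n}\log|X_n|\le\lambda-\tfrac{\sigma^2}{2}+C_4\Delta t^{1/2}.$$ Consequently, for $0<\Delta t<\Delta t_2$: (a) if $\lambda+\frac{\sigma^2}{2}<0$ (resp. $>0$) then $X_n$ is mean-square exponentially stable (resp. mean-square exponentially blowing up); (b) if $\lambda-\frac{\sigma^2}{2}<0$ (resp. $>0$) then $X_n$ is almost-surely exponentially stable (resp. almost-surely exponentially blowing up).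
   Context: Terminology: $X_n$ is mean-square exponentially stable if there exist $C,\alpha>0$ with $[\mathbb E|X_n|^2]^{1/2}\le Ce^{-\alpha t_n}$ for all large $n$, and mean-square exponentially blowing up if there exist $C,\beta>0$ with $[\mathbb E|X_n|^2]^{1/2}\ge Ce^{\beta t_n}$ for all large $n$; almost-surely exponentially stable (resp. blowing up) means that almost surely $|X_n|\le Ce^{-\alpha t_n}$ (resp. $|X_n|\ge Ce^{\beta t_n}$) for all large $n$, for some $\alpha>0$ (resp. $\beta>0$) and a (possibly random) $C>0$. Constants may depend on $\lambda,\sigma$. *)

theory Defs
  imports "HOL-Probability.Probability"
begin

definition std_brownian_motion :: "'a measure \<Rightarrow> (real \<Rightarrow> 'a \<Rightarrow> real) \<Rightarrow> bool" where
  "std_brownian_motion M B \<longleftrightarrow>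
     prob_space M \<and>
     (\<forall>t\<ge>0. B t \<in> borel_measurable M) \<and>
     (AE \<omega> in M. B 0 \<omega> = 0) \<and>
     (AE \<omega> in M. continuous_on {0..} (\<lambda>t. B t \<omega>)) \<and>
     (\<forall>s t. 0 \<le> s \<and> s < t \<longrightarrow>
        distributed M lborel (\<lambda>\<omega>. B t \<omega> - B s \<omega>) (normal_density 0 (sqrt (t - s)))) \<and>
     (\<forall>(ts :: nat \<Rightarrow> real) n. 0 \<le> ts 0 \<and> (\<forall>i<n. ts i < ts (Suc i)) \<longrightarrow>
        prob_space.indep_vars M (\<lambda>_. borel) (\<lambda>i \<omega>. B (ts (Suc i)) \<omega> - B (ts i) \<omega>) {..<n})"

fun milstein :: "real \<Rightarrow> real \<Rightarrow> real \<Rightarrow> (real \<Rightarrow> 'a \<Rightarrow> real) \<Rightarrow> real \<Rightarrow> nat \<Rightarrow> 'a \<Rightarrow> real" where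
  "milstein lam sig x0 B dt 0 \<omega> = x0"
| "milstein lam sig x0 B dt (Suc n) \<omega> =
     (let dB = B (real (Suc n) * dt) \<omega> - B (real n * dt) \<omega> in
      milstein lam sig x0 B dt n \<omega> *
        (1 + lam * dt + sig * dB + sig\<^sup>2 / 2 * (dB\<^sup>2 - dt)))"

definition ms_exp_stable :: "'a measure \<Rightarrow> (nat \<Rightarrow> 'a \<Rightarrow> real) \<Rightarrow> real \<Rightarrow> bool" where
  "ms_exp_stable M X dt \<longleftrightarrow> (\<exists>C \<alpha>. C > 0 \<and> \<alpha> > 0 \<and>
     (\<forall>\<^sub>F n in sequentially. sqrt (integral\<^sup>L M (\<lambda>\<omega>. \<bar>X n \<omega>\<bar>\<^sup>2)) \<le> C * exp (- \<alpha> * (real n * dt))))"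

definition ms_exp_blowup :: "'a measure \<Rightarrow> (nat \<Rightarrow> 'a \<Rightarrow> real) \<Rightarrow> real \<Rightarrow> bool" where
  "ms_exp_blowup M X dt \<longleftrightarrow> (\<exists>C \<beta>. C > 0 \<and> \<beta> > 0 \<and>
     (\<forall>\<^sub>F n in sequentially. sqrt (integral\<^sup>L M (\<lambda>\<omega>. \<bar>X n \<omega>\<bar>\<^sup>2)) \<ge> C * exp (\<beta> * (real n * dt))))"

definition as_exp_stable :: "'a measure \<Rightarrow> (nat \<Rightarrow> 'a \<Rightarrow> real) \<Rightarrow> real \<Rightarrow> bool" where
  "as_exp_stable M X dt \<longleftrightarrow> (\<exists>\<alpha>>0. AE \<omega> in M. \<exists>C>0.
     (\<forall>\<^sub>F n in sequentially. \<bar>X n \<omega>\<bar> \<le> C * exp (- \<alpha> * (real n * dt))))"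

definition as_exp_blowup :: "'a measure \<Rightarrow> (nat \<Rightarrow> 'a \<Rightarrow> real) \<Rightarrow> real \<Rightarrow> bool" where
  "as_exp_blowup M X dt \<longleftrightarrow> (\<exists>\<beta>>0. AE \<omega> in M. \<exists>C>0.
     (\<forall>\<^sub>F n in sequentially. \<bar>X n \<omega>\<bar> \<ge> C * exp (\<beta> * (real n * dt))))"

end

theory Submission
  imports Defs
begin

(* The scheme is multiplicative: X_n = x0 * prod_{i<n} g(dB_i) with independent increments
   dB_i ~ N(0, dt) and g(y) = 1 + lam dt + sig y + sig^2/2 (y^2 - dt).

   Mean square: E|X_n|^2 = x0^2 m^n with m = E g(dB)^2 = 1 + (2 lam + sig^2) dt + O(dt^2), so the
   mean-square exponent is exactly ln m / (2 dt) = lam + sig^2/2 + O(dt).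

   Almost surely: for small dt we have g >= 1/4, so ln|X_n| - ln|x0| is a sum of i.i.d. terms ln g(dB_i).
   A Taylor bound for g^p at 1 with p = +-sqrt dt gives E g(dB)^p <= 1 + p dt (lam - sig^2/2) + K dt^2.
   Chernoff's bound and Borel-Cantelli then keep (1/(n dt)) sum_{i<n} ln g(dB_i) eventually within
   (K + 1) sqrt dt of lam - sig^2/2. *)

lemma powr_third_derivative_bound:
  fixes t p :: real
  assumes t: "t \<ge> 1/4" and p: "\<bar>p\<bar> \<le> 1"
  shows "\<bar>p * (p - 1) * (p - 2)\<bar> * t powr (p - 3) \<le> 1536 * \<bar>p\<bar>"
proof -
  have "\<bar>p * (p - 1) * (p - 2)\<bar> \<le> \<bar>p\<bar> * 2 * 3"
    unfolding abs_mult using p by (intro mult_mono) auto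
  moreover have "t powr (p - 3) \<le> (1/4) powr (p - 3)"
    using t p by (intro powr_mono2') auto
  moreover have "(1/4 :: real) powr (p - 3) = 4 powr (3 - p)"
    by (simp add: powr_divide flip: powr_minus_divide)
  moreover have "4 powr (3 - p) \<le> 4 powr (4 :: real)"
    using p by (intro powr_mono) auto
  ultimately have "\<bar>p * (p - 1) * (p - 2)\<bar> * t powr (p - 3) \<le> (\<bar>p\<bar> * 2 * 3) * 256"
    by (intro mult_mono) auto
  then show ?thesis by simp
qed

lemma powr_le_taylor2:
  fixes x p :: real
  assumes x: "x \<ge> 1/4" and p: "\<bar>p\<bar> \<le> 1"
  shows "x powr p \<le> 1 + p*(x-1) + p*(p-1)/2*(x-1)^2 + 256*\<bar>p\<bar>*\<bar>x-1\<bar>^3"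
proof (cases "x = 1")
  case True then show ?thesis by simp
next
  case False
  define d where "d m y = (\<Prod>j<m. p - real j) * y powr (p - real m)" for m y
  have "DERIV (d m) t :> d (Suc m) t" if "0 < t" for m t
  proof -
    have "DERIV (d m) t :> (\<Prod>j<m. p - real j) * ((p - real m) * t powr (p - real m - 1))"
      unfolding d_def using that by (intro derivative_eq_intros) auto
    then show ?thesis by (simp add: d_def diff_diff_eq add.commute mult.assoc)
  qed
  moreover have "d 0 = (\<lambda>y. y powr p)" by (simp add: d_def fun_eq_iff)
  ultimately obtain t where t: "if x < 1 then x < t \<and> t < 1 else 1 < t \<and> t < x"
    and taylor: "x powr p = (\<Sum>m<3. d m 1 / fact m * (x - 1) ^ m) + d 3 t / fact 3 * (x - 1) ^ 3"
    using Taylor[of 3 d "\<lambda>y. y powr p" "1/4" "max x 1" 1 x] False x by force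
  have "t \<ge> 1/4" using t x by (auto split: if_splits)
  have quadratic_part: "(\<Sum>m<3. d m 1 / fact m * (x - 1) ^ m) = 1 + p*(x-1) + p*(p-1)/2*(x-1)^2"
    by (simp add: d_def numeral_3_eq_3 power2_eq_square)
  have "\<bar>d 3 t / fact 3 * (x - 1) ^ 3\<bar> = \<bar>p*(p-1)*(p-2)\<bar> * t powr (p - 3) / 6 * \<bar>x-1\<bar>^3"
    by (simp add: d_def numeral_3_eq_3 abs_mult power_abs fact_numeral mult.assoc)
  also have "\<dots> \<le> 1536 * \<bar>p\<bar> / 6 * \<bar>x-1\<bar>^3"
    using powr_third_derivative_bound[OF \<open>t \<ge> 1/4\<close> p]
    by (intro mult_right_mono divide_right_mono) auto
  also have "\<dots> = 256*\<bar>p\<bar>*\<bar>x-1\<bar>^3" by simp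
  finally show ?thesis
    unfolding taylor quadratic_part by (smt (verit) abs_ge_self)
qed

lemma normal_distributed_moment:
  assumes "distributed M lborel X (normal_density 0 s)" and "0 < s"
  shows "has_bochner_integral M (\<lambda>\<omega>. X \<omega> ^ k)
           (if even k then fact k / ((2 / s\<^sup>2) ^ (k div 2) * fact (k div 2)) else 0)"
proof -
  have "integrable M (\<lambda>\<omega>. X \<omega> ^ k)"
    using distributed_integrable[OF assms(1), of "\<lambda>x. x ^ k"] integrable_normal_moment[of s 0 k] \<open>0 < s\<close>
    by simp
  moreover have "(\<integral>\<omega>. X \<omega> ^ k \<partial>M) = (\<integral>x. normal_density 0 s x * x ^ k \<partial>lborel)"
    using distributed_integral[OF assms(1), of "\<lambda>x. x ^ k"] by simp
  moreover have "(\<integral>x. normal_density 0 s x * x ^ k \<partial>lborel)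
      = (if even k then fact k / ((2 / s\<^sup>2) ^ (k div 2) * fact (k div 2)) else 0)"
    using integral_normal_moment_even[OF \<open>0 < s\<close>, of 0 "k div 2"]
      integral_normal_moment_odd[OF \<open>0 < s\<close>, of 0 "k div 2"]
    by (cases "even k") (auto elim!: evenE oddE)
  ultimately show ?thesis by (simp add: has_bochner_integral_iff)
qed

lemma power4_add_le:
  fixes a b :: real
  shows "(a + b)^4 \<le> 8 * (a^4 + b^4)"
proof -
  have "(a + b)^2 \<le> 2 * (a^2 + b^2)"
    using zero_le_square[of "a - b"] by (simp add: power2_eq_square algebra_simps)
  then have "(a + b)^4 \<le> (2 * (a^2 + b^2))^2"
    using power_mono[of "(a + b)^2" _ 2] by (simp flip: power_mult)
  also have "\<dots> \<le> 8 * (a^4 + b^4)"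
    using zero_le_square[of "a^2 - b^2"] by (simp add: power2_eq_square power4_eq_xxxx algebra_simps)
  finally show ?thesis .
qed

lemma (in prob_space) AE_eventually_sum_less_Chernoff:
  fixes L :: "nat \<Rightarrow> 'a \<Rightarrow> real"
  assumes indep: "\<And>n. indep_vars (\<lambda>_. borel) L {..<n}"
    and integrable: "\<And>i. integrable M (\<lambda>\<omega>. exp (p * L i \<omega>))"
    and bound: "\<And>i. expectation (\<lambda>\<omega>. exp (p * L i \<omega>)) \<le> exp (p * a - e)"
    and "0 < e"
  shows "AE \<omega> in M. eventually (\<lambda>n. p * (\<Sum>i<n. L i \<omega>) < p * (real n * a)) sequentially"
proof -
  have [measurable]: "L i \<in> borel_measurable M" for i
    using indep[of "Suc i"] unfolding indep_vars_def by auto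
  define A where "A n = {\<omega> \<in> space M. exp (p * (real n * a)) \<le> exp (p * (\<Sum>i<n. L i \<omega>))}" for n
  have A_sets[measurable]: "A n \<in> sets M" for n
    unfolding A_def by measurable
  have exp_sum: "exp (p * (\<Sum>i<n. L i \<omega>)) = (\<Prod>i<n. exp (p * L i \<omega>))" for n \<omega>
    by (simp add: sum_distrib_left exp_sum)
  have indep_exp: "indep_vars (\<lambda>_. borel) (\<lambda>i \<omega>. exp (p * L i \<omega>)) {..<n}" for n
    by (rule indep_vars_compose2[OF indep]) simp
  have "measure M (A n) \<le> exp (- e) ^ n" for n
  proof -
    have "measure M (A n) \<le> expectation (\<lambda>\<omega>. exp (p * (\<Sum>i<n. L i \<omega>))) / exp (p * (real n * a))"
      unfolding A_def exp_sum
      by (intro integral_Markov_inequality_measure indep_vars_integrable[OF _ indep_exp])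
        (auto simp: integrable intro!: prod_nonneg)
    also have "expectation (\<lambda>\<omega>. exp (p * (\<Sum>i<n. L i \<omega>))) = (\<Prod>i<n. expectation (\<lambda>\<omega>. exp (p * L i \<omega>)))"
      unfolding exp_sum by (intro indep_vars_lebesgue_integral indep_exp integrable) auto
    also have "\<dots> \<le> exp (p * a - e) ^ n"
      using prod_mono[of "{..<n}" "\<lambda>i. expectation (\<lambda>\<omega>. exp (p * L i \<omega>))" "\<lambda>_. exp (p * a - e)"]
      by (simp add: bound integral_nonneg_AE)
    also have "exp (p * a - e) ^ n / exp (p * (real n * a)) = exp (- e) ^ n"
      by (simp add: exp_of_nat_mult[symmetric] exp_diff[symmetric] algebra_simps)
    finally show ?thesis by (simp add: divide_right_mono)
  qed
  then have "summable (\<lambda>n. measure M (A n))"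
    using \<open>0 < e\<close> by (intro summable_comparison_test'[OF summable_geometric, of "exp (- e)"]) auto
  then have "AE \<omega> in M. eventually (\<lambda>n. \<omega> \<in> space M - A n) sequentially"
    by (intro borel_cantelli_AE1) (auto simp: less_top[symmetric])
  then show ?thesis
    by (rule AE_mp) (auto simp: A_def not_le elim!: eventually_mono)
qed

lemma limsup_ln_growth_rate_bounds:
  fixes f :: "nat \<Rightarrow> real"
  assumes "0 < c" and "0 < dt"
    and "eventually (\<lambda>n. c * exp (a * (real n * dt)) \<le> f n \<and> f n \<le> c * exp (b * (real n * dt))) sequentially"
  shows "ereal a \<le> limsup (\<lambda>n. ereal (ln (f n) / (real n * dt)))"
    and "limsup (\<lambda>n. ereal (ln (f n) / (real n * dt))) \<le> ereal b"
proof -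
  define h where "h n = ln c / (real n * dt)" for n
  have h: "h \<longlonglongrightarrow> 0"
    using lim_const_over_n[of "ln c / dt"] unfolding h_def by (simp add: mult.commute)
  have "eventually (\<lambda>n. h n + a \<le> ln (f n) / (real n * dt) \<and> ln (f n) / (real n * dt) \<le> h n + b) sequentially"
    using assms(3) eventually_gt_at_top[of 0]
  proof eventually_elim
    case (elim n)
    then have "0 < real n * dt" and "0 < f n"
      using assms(1,2) by (auto intro: less_le_trans[OF mult_pos_pos[OF _ exp_gt_zero]])
    then have "ln c + a * (real n * dt) \<le> ln (f n) \<and> ln (f n) \<le> ln c + b * (real n * dt)"
      using elim(1) assms(1) by (auto simp: ln_mult simp flip: ln_le_cancel_iff)
    then show ?case
      using \<open>0 < real n * dt\<close> by (auto simp: h_def field_simps)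
  qed
  then have "liminf (\<lambda>n. ereal (h n + a)) \<le> liminf (\<lambda>n. ereal (ln (f n) / (real n * dt)))"
    and "limsup (\<lambda>n. ereal (ln (f n) / (real n * dt))) \<le> limsup (\<lambda>n. ereal (h n + b))"
    by (auto intro!: Liminf_mono Limsup_mono elim!: eventually_mono)
  moreover have "liminf (\<lambda>n. ereal (h n + a)) = ereal a" "limsup (\<lambda>n. ereal (h n + b)) = ereal b"
    using h by (auto intro!: lim_imp_Liminf lim_imp_Limsup tendsto_eq_intros)
  ultimately show "ereal a \<le> limsup (\<lambda>n. ereal (ln (f n) / (real n * dt)))"
    and "limsup (\<lambda>n. ereal (ln (f n) / (real n * dt))) \<le> ereal b"
    using Liminf_le_Limsup[OF trivial_limit_sequentially] order_trans by auto
qed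

lemma (in prob_space) has_bochner_integral_const: "has_bochner_integral M (\<lambda>_. c) (c :: real)"
  using prob_space by (simp add: has_bochner_integral_iff)

locale brownian_grid =
  fixes M :: "'a measure" and B :: "real \<Rightarrow> 'a \<Rightarrow> real" and dt :: real
  assumes brownian: "std_brownian_motion M B" and dt_pos: "0 < dt"
begin

sublocale prob_space M
  using brownian by (simp add: std_brownian_motion_def)

definition dB :: "nat \<Rightarrow> 'a \<Rightarrow> real" where
  "dB i \<omega> = B (real (Suc i) * dt) \<omega> - B (real i * dt) \<omega>"

lemma distributed_dB: "distributed M lborel (dB i) (normal_density 0 (sqrt dt))"
proof -
  have "\<forall>s t. 0 \<le> s \<and> s < t \<longrightarrow>
      distributed M lborel (\<lambda>\<omega>. B t \<omega> - B s \<omega>) (normal_density 0 (sqrt (t - s)))"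
    using brownian by (simp add: std_brownian_motion_def)
  from this[rule_format, of "real i * dt" "real (Suc i) * dt"] show ?thesis
    using dt_pos by (simp add: dB_def[abs_def] algebra_simps)
qed

lemma dB_measurable[measurable]: "dB i \<in> borel_measurable M"
  using distributed_dB[of i] by (auto dest: distributed_measurable)

lemma indep_dB: "indep_vars (\<lambda>_. borel) dB {..<n}"
proof -
  have "\<forall>(ts :: nat \<Rightarrow> real) n. 0 \<le> ts 0 \<and> (\<forall>i<n. ts i < ts (Suc i)) \<longrightarrow>
      indep_vars (\<lambda>_. borel) (\<lambda>i \<omega>. B (ts (Suc i)) \<omega> - B (ts i) \<omega>) {..<n}"
    using brownian by (simp add: std_brownian_motion_def)
  from this[rule_format, of "\<lambda>i. real i * dt" n] show ?thesis
    using dt_pos by (simp add: dB_def[abs_def])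
qed

lemma dB_moment:
  "has_bochner_integral M (\<lambda>\<omega>. dB i \<omega> ^ k)
     (if even k then fact k / ((2 / dt) ^ (k div 2) * fact (k div 2)) else 0)"
proof -
  have "(sqrt dt)\<^sup>2 = dt" using dt_pos by simp
  then show ?thesis
    using normal_distributed_moment[OF distributed_dB[of i], where k=k] dt_pos
    by (simp only: real_sqrt_gt_zero)
qed

lemma dB_moments:
  shows "has_bochner_integral M (\<lambda>\<omega>. dB i \<omega>) 0"
    and "has_bochner_integral M (\<lambda>\<omega>. (dB i \<omega>)\<^sup>2) dt"
    and "has_bochner_integral M (\<lambda>\<omega>. dB i \<omega> ^ 3) 0"
    and "has_bochner_integral M (\<lambda>\<omega>. dB i \<omega> ^ 4) (3 * dt\<^sup>2)"
    and "has_bochner_integral M (\<lambda>\<omega>. dB i \<omega> ^ 8) (105 * dt ^ 4)"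
  using dB_moment[of i 1] dB_moment[of i 2] dB_moment[of i 3] dB_moment[of i 4] dB_moment[of i 8]
    dt_pos by (simp_all add: fact_numeral power2_eq_square field_simps)

lemma dB_quadratic_mean:
  "has_bochner_integral M (\<lambda>\<omega>. a + b * dB i \<omega> + c * (dB i \<omega>)\<^sup>2) (a + c * dt)"
  using has_bochner_integral_add[OF has_bochner_integral_add[OF has_bochner_integral_const
      has_bochner_integral_mult_right[OF dB_moments(1)]] has_bochner_integral_mult_right[OF dB_moments(2)]]
  by simp

lemma dB_quadratic_square_mean:
  "has_bochner_integral M (\<lambda>\<omega>. (a + b * dB i \<omega> + c * (dB i \<omega>)\<^sup>2)\<^sup>2)
     (a\<^sup>2 + (b\<^sup>2 + 2 * a * c) * dt + 3 * c\<^sup>2 * dt\<^sup>2)"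
proof -
  have "has_bochner_integral M (\<lambda>\<omega>. a\<^sup>2 + (2*a*b) * dB i \<omega> + (b\<^sup>2 + 2*a*c) * (dB i \<omega>)\<^sup>2
       + (2*b*c) * dB i \<omega> ^ 3 + c\<^sup>2 * dB i \<omega> ^ 4)
     (a\<^sup>2 + (2*a*b) * 0 + (b\<^sup>2 + 2*a*c) * dt + (2*b*c) * 0 + c\<^sup>2 * (3 * dt\<^sup>2))"
    by (intro has_bochner_integral_add has_bochner_integral_mult_right has_bochner_integral_const
        dB_moments)
  then show ?thesis
    by (simp add: power2_eq_square power3_eq_cube power4_eq_xxxx algebra_simps)
qed

end

(* The summand 1 only makes the constant positive. *)
definition ms_rate_const :: "real \<Rightarrow> real \<Rightarrow> real" where
  "ms_rate_const lam sig = (2 * \<bar>lam\<bar> + sig\<^sup>2 + lam\<^sup>2 + sig ^ 4)\<^sup>2 + lam\<^sup>2 + sig ^ 4 + 1"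

definition as_rate_slack :: "real \<Rightarrow> real \<Rightarrow> real" where
  "as_rate_slack lam sig = 129 * (lam\<^sup>2 + sig\<^sup>2 + sig ^ 4) + 8192 * (lam ^ 4 + 3 * sig ^ 4 + 7 * sig ^ 8)"

locale milstein_grid = brownian_grid +
  fixes lam sig :: real
  assumes dt_less_1: "dt < 1" and dt_small: "(\<bar>lam\<bar> + sig\<^sup>2) * dt \<le> 1/8"
    \<comment> \<open>keeps the factor above 1/4 and the mean-square factor within 1/2 of 1\<close>
begin

definition factor :: "real \<Rightarrow> real" where
  "factor y = 1 + lam * dt + sig * y + sig\<^sup>2 / 2 * (y\<^sup>2 - dt)"

lemma factor_measurable[measurable]: "factor \<in> borel_measurable borel"
  unfolding factor_def by measurable

lemma milstein_eq_prod: "milstein lam sig x0 B dt n \<omega> = x0 * (\<Prod>i<n. factor (dB i \<omega>))"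
  by (induction n) (simp_all add: Let_def factor_def dB_def)

lemma factor_ge: "factor y \<ge> 1/4"
proof -
  have "factor y = (sig * y + 1)\<^sup>2 / 2 + (1/2 + lam * dt - sig\<^sup>2 * dt / 2)"
    by (simp add: factor_def power2_eq_square field_simps)
  moreover have "\<bar>lam\<bar> * dt + sig\<^sup>2 * dt \<le> 1/8" and "0 \<le> sig\<^sup>2 * dt"
    using dt_small dt_pos by (simp_all add: algebra_simps)
  moreover have "- lam * dt \<le> \<bar>lam\<bar> * dt"
    using dt_pos by (intro mult_right_mono) auto
  ultimately show ?thesis
    using zero_le_power2[of "sig * y + 1"] by linarith
qed

lemma factor_minus_1_eq: "factor y - 1 = (lam * dt - sig\<^sup>2 * dt / 2) + sig * y + sig\<^sup>2 / 2 * y\<^sup>2"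
  unfolding factor_def by (simp add: field_simps)

lemma factor_minus_1_mean: "has_bochner_integral M (\<lambda>\<omega>. factor (dB i \<omega>) - 1) (lam * dt)"
  using dB_quadratic_mean[where a="lam * dt - sig\<^sup>2 * dt / 2" and b=sig and c="sig\<^sup>2 / 2" and i=i]
  by (simp add: factor_minus_1_eq field_simps)

lemma factor_minus_1_square_mean:
  "has_bochner_integral M (\<lambda>\<omega>. (factor (dB i \<omega>) - 1)\<^sup>2) (sig\<^sup>2 * dt + (lam\<^sup>2 + sig ^ 4 / 2) * dt\<^sup>2)"
  using dB_quadratic_square_mean[where a="lam * dt - sig\<^sup>2 * dt / 2" and b=sig and c="sig\<^sup>2 / 2" and i=i]
  by (simp add: factor_minus_1_eq power2_eq_square power4_eq_xxxx algebra_simps)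

definition ms_factor :: real where
  "ms_factor = 1 + (2 * lam + sig\<^sup>2) * dt + (lam\<^sup>2 + sig ^ 4 / 2) * dt\<^sup>2"

lemma factor_square_mean: "has_bochner_integral M (\<lambda>\<omega>. (factor (dB i \<omega>))\<^sup>2) ms_factor"
proof -
  have "has_bochner_integral M (\<lambda>\<omega>. 1 + 2 * (factor (dB i \<omega>) - 1) + (factor (dB i \<omega>) - 1)\<^sup>2)
      (1 + 2 * (lam * dt) + (sig\<^sup>2 * dt + (lam\<^sup>2 + sig ^ 4 / 2) * dt\<^sup>2))"
    by (intro has_bochner_integral_add has_bochner_integral_mult_right has_bochner_integral_const
        factor_minus_1_mean factor_minus_1_square_mean)
  then show ?thesis
    by (simp add: ms_factor_def power2_eq_square algebra_simps)
qed

lemma ms_factor_minus_1_bound: "\<bar>ms_factor - 1\<bar> \<le> 1/2"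
proof -
  define s where "s = (\<bar>lam\<bar> + sig\<^sup>2) * dt"
  have "0 \<le> s" "s \<le> 1/8" using dt_small dt_pos by (auto simp: s_def)
  have "\<bar>2 * lam + sig\<^sup>2\<bar> \<le> 2 * (\<bar>lam\<bar> + sig\<^sup>2)"
    using zero_le_power2[of sig] by (simp add: abs_le_iff abs_if)
  then have "\<bar>(2 * lam + sig\<^sup>2) * dt\<bar> \<le> 2 * s"
    using dt_pos mult_right_mono[of _ _ dt] by (simp add: s_def abs_mult mult.assoc)
  moreover have "(lam\<^sup>2 + sig ^ 4 / 2) * dt\<^sup>2 \<le> s\<^sup>2"
  proof -
    have "lam\<^sup>2 + sig ^ 4 / 2 \<le> (\<bar>lam\<bar> + sig\<^sup>2)\<^sup>2"
      by (simp add: power2_sum zero_le_mult_iff flip: power_mult)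
    then show ?thesis
      unfolding s_def power_mult_distrib by (intro mult_right_mono) auto
  qed
  moreover have "s\<^sup>2 \<le> 1/64"
    using mult_mono[OF \<open>s \<le> 1/8\<close> \<open>s \<le> 1/8\<close>] \<open>0 \<le> s\<close> by (simp add: power2_eq_square)
  moreover have "\<bar>ms_factor - 1\<bar> \<le> \<bar>(2 * lam + sig\<^sup>2) * dt\<bar> + (lam\<^sup>2 + sig ^ 4 / 2) * dt\<^sup>2"
    using abs_triangle_ineq[of "(2 * lam + sig\<^sup>2) * dt" "(lam\<^sup>2 + sig ^ 4 / 2) * dt\<^sup>2"]
    by (simp add: ms_factor_def)
  ultimately show ?thesis
    using \<open>s \<le> 1/8\<close> by linarith
qed

definition ms_rate :: real where
  "ms_rate = ln ms_factor / (2 * dt)"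

lemma ms_norm_milstein:
  "sqrt (\<integral>\<omega>. \<bar>milstein lam sig x0 B dt n \<omega>\<bar>\<^sup>2 \<partial>M) = \<bar>x0\<bar> * exp (ms_rate * (real n * dt))"
proof -
  have "(\<integral>\<omega>. \<bar>milstein lam sig x0 B dt n \<omega>\<bar>\<^sup>2 \<partial>M) = x0\<^sup>2 * (\<integral>\<omega>. (\<Prod>i<n. (factor (dB i \<omega>))\<^sup>2) \<partial>M)"
    by (simp add: milstein_eq_prod power_mult_distrib prod_power_distrib)
  also have "(\<integral>\<omega>. (\<Prod>i<n. (factor (dB i \<omega>))\<^sup>2) \<partial>M) = ms_factor ^ n"
    using factor_square_mean
    by (subst indep_vars_lebesgue_integral)
       (auto intro: indep_vars_compose2[OF indep_dB] simp: has_bochner_integral_iff)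
  also have "ms_factor = exp (2 * (ms_rate * dt))"
  proof -
    have "0 < ms_factor" using ms_factor_minus_1_bound unfolding abs_le_iff by linarith
    then show ?thesis using dt_pos by (simp add: ms_rate_def)
  qed
  also have "x0\<^sup>2 * exp (2 * (ms_rate * dt)) ^ n = (\<bar>x0\<bar> * exp (ms_rate * (real n * dt)))\<^sup>2"
    by (simp add: power_mult_distrib power2_eq_square mult_ac flip: exp_of_nat_mult exp_add)
  finally show ?thesis by simp
qed

lemma ms_rate_approx: "\<bar>ms_rate - (lam + sig\<^sup>2 / 2)\<bar> \<le> ms_rate_const lam sig * dt"
proof -
  define w where "w = ms_factor - 1"
  define W where "W = 2 * \<bar>lam\<bar> + sig\<^sup>2 + lam\<^sup>2 + sig ^ 4"
  have "\<bar>w\<bar> \<le> \<bar>2 * lam + sig\<^sup>2\<bar> * dt + (lam\<^sup>2 + sig ^ 4 / 2) * dt\<^sup>2"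
    using dt_pos abs_triangle_ineq[of "(2 * lam + sig\<^sup>2) * dt" "(lam\<^sup>2 + sig ^ 4 / 2) * dt\<^sup>2"]
    by (simp add: w_def ms_factor_def abs_mult)
  also have "\<dots> \<le> (2 * \<bar>lam\<bar> + sig\<^sup>2) * dt + (lam\<^sup>2 + sig ^ 4) * dt"
  proof (intro add_mono mult_mono)
    show "dt\<^sup>2 \<le> dt" using dt_pos dt_less_1 by (simp add: power2_eq_square)
  qed (use dt_pos in \<open>auto simp: abs_mult intro: order_trans[OF abs_triangle_ineq]\<close>)
  finally have "\<bar>w\<bar> \<le> W * dt" by (simp add: W_def algebra_simps)
  then have "w\<^sup>2 / dt \<le> W\<^sup>2 * dt"
    using dt_pos power_mono[of "\<bar>w\<bar>" "W * dt" 2] by (simp add: field_simps power2_eq_square)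
  moreover have "\<bar>ln (1 + w) - w\<bar> \<le> 2 * w\<^sup>2"
    using ms_factor_minus_1_bound by (intro abs_ln_one_plus_x_minus_x_bound) (simp add: w_def)
  ultimately have log_error: "\<bar>(ln (1 + w) - w) / (2 * dt)\<bar> \<le> W\<^sup>2 * dt"
    using dt_pos by (simp add: field_simps)
  define D where "D = (lam\<^sup>2 + sig ^ 4 / 2) * dt / 2"
  have "ms_rate - (lam + sig\<^sup>2 / 2) = (ln (1 + w) - w) / (2 * dt) + D"
    using dt_pos by (simp add: ms_rate_def w_def D_def ms_factor_def field_simps power2_eq_square)
  moreover have "0 \<le> D" "D \<le> (lam\<^sup>2 + sig ^ 4) * dt"
    using dt_pos by (simp_all add: D_def field_simps)
  moreover have "ms_rate_const lam sig * dt = W\<^sup>2 * dt + (lam\<^sup>2 + sig ^ 4) * dt + dt"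
    by (simp add: ms_rate_const_def W_def algebra_simps)
  ultimately show ?thesis
    using log_error dt_pos abs_triangle_ineq[of "(ln (1 + w) - w) / (2 * dt)" D] by simp
qed

lemma power2_eq_dt_if_abs_eq_sqrt: "\<bar>p\<bar> = sqrt dt \<Longrightarrow> p\<^sup>2 = dt"
  using dt_pos by (metis power2_abs real_sqrt_pow2 less_imp_le)

lemma factor_powr_le:
  assumes p: "\<bar>p\<bar> = sqrt dt"
  shows "factor y powr p \<le> 1 + p * (factor y - 1) + (p * (p - 1) / 2 + 128 * dt) * (factor y - 1)\<^sup>2
           + 8192 * (lam ^ 4 * dt ^ 4 + sig ^ 4 * y ^ 4 + sig ^ 8 / 16 * y ^ 8 + sig ^ 8 / 16 * dt ^ 4)"
proof -
  define u where "u = factor y - 1"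
  define P where "P = lam ^ 4 * dt ^ 4 + sig ^ 4 * y ^ 4 + sig ^ 8 / 16 * y ^ 8 + sig ^ 8 / 16 * dt ^ 4"
  have "\<bar>p\<bar> \<le> 1" using p dt_pos dt_less_1 by simp
  then have taylor: "factor y powr p \<le> 1 + p * u + p * (p - 1) / 2 * u\<^sup>2 + 256 * \<bar>p\<bar> * \<bar>u\<bar> ^ 3"
    using powr_le_taylor2[OF factor_ge] by (simp add: u_def)
  \<comment> \<open>AM-GM trades the cubic Taylor remainder for second and fourth moments\<close>
  have am_gm: "2 * \<bar>p\<bar> * \<bar>u\<bar> ^ 3 \<le> dt * u\<^sup>2 + u ^ 4"
    using power2_eq_dt_if_abs_eq_sqrt[OF p] zero_le_power2[of "\<bar>p\<bar> * \<bar>u\<bar> - u\<^sup>2"]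
    by (simp add: power2_eq_square power3_eq_cube power4_eq_xxxx algebra_simps)
  have "u ^ 4 \<le> 64 * P"
  proof -
    have "u = (lam * dt + sig * y) + (sig\<^sup>2 / 2 * y\<^sup>2 + - (sig\<^sup>2 / 2 * dt))"
      unfolding u_def factor_def by (simp add: field_simps)
    then have "u ^ 4 \<le> 8 * ((lam * dt + sig * y) ^ 4 + (sig\<^sup>2 / 2 * y\<^sup>2 + - (sig\<^sup>2 / 2 * dt)) ^ 4)"
      using power4_add_le by simp
    also have "\<dots> \<le> 8 * (8 * ((lam * dt) ^ 4 + (sig * y) ^ 4)
        + 8 * ((sig\<^sup>2 / 2 * y\<^sup>2) ^ 4 + (- (sig\<^sup>2 / 2 * dt)) ^ 4))"
      by (intro mult_left_mono add_mono power4_add_le) auto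
    also have "\<dots> = 64 * P"
      by (simp add: P_def power_divide algebra_simps flip: power_mult)
    finally show ?thesis .
  qed
  with taylor am_gm show ?thesis
    unfolding u_def[symmetric] P_def[symmetric] by (simp add: algebra_simps)
qed

lemma taylor_majorant_mean_le:
  assumes p: "\<bar>p\<bar> = sqrt dt"
  shows "1 + p * (lam * dt) + (p * (p - 1) / 2 + 128 * dt) * (sig\<^sup>2 * dt + (lam\<^sup>2 + sig ^ 4 / 2) * dt\<^sup>2)
      + 8192 * (lam ^ 4 * dt ^ 4 + sig ^ 4 * (3 * dt\<^sup>2) + sig ^ 8 / 16 * (105 * dt ^ 4) + sig ^ 8 / 16 * dt ^ 4)
    \<le> 1 + p * dt * (lam - sig\<^sup>2 / 2) + as_rate_slack lam sig * dt\<^sup>2"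
    (is "?EQ \<le> _")
proof -
  define E where "E = lam\<^sup>2 + sig ^ 4 / 2"
  have "\<bar>p\<bar> \<le> 1" using p dt_pos dt_less_1 by simp
  have dt: "dt = p\<^sup>2"
    using power2_eq_dt_if_abs_eq_sqrt[OF p] by simp
  have "?EQ - (1 + p * dt * (lam - sig\<^sup>2 / 2)) = 257 / 2 * (sig\<^sup>2 * dt\<^sup>2) + 257 / 2 * (E * dt ^ 3)
      - p * (E * dt\<^sup>2) / 2 + 8192 * (lam ^ 4 * dt ^ 4) + 24576 * (sig ^ 4 * dt\<^sup>2) + 54272 * (sig ^ 8 * dt ^ 4)"
    unfolding E_def dt by (simp add: field_simps eval_nat_numeral)
  moreover have "E * dt ^ 3 \<le> E * dt\<^sup>2" "lam ^ 4 * dt ^ 4 \<le> lam ^ 4 * dt\<^sup>2" "sig ^ 8 * dt ^ 4 \<le> sig ^ 8 * dt\<^sup>2"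
    using dt_pos dt_less_1 by (auto simp: E_def intro!: mult_left_mono power_decreasing)
  moreover have "- p * (E * dt\<^sup>2) \<le> E * dt\<^sup>2"
    using \<open>\<bar>p\<bar> \<le> 1\<close> mult_right_mono[of "- p" 1 "E * dt\<^sup>2"] by (simp add: E_def)
  moreover have "as_rate_slack lam sig * dt\<^sup>2 = 129 * (lam\<^sup>2 * dt\<^sup>2) + 129 * (sig\<^sup>2 * dt\<^sup>2) + 129 * (sig ^ 4 * dt\<^sup>2)
      + 8192 * (lam ^ 4 * dt\<^sup>2) + 24576 * (sig ^ 4 * dt\<^sup>2) + 57344 * (sig ^ 8 * dt\<^sup>2)"
    by (simp add: as_rate_slack_def algebra_simps)
  moreover have "E * dt\<^sup>2 = lam\<^sup>2 * dt\<^sup>2 + sig ^ 4 * dt\<^sup>2 / 2"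
    by (simp add: E_def algebra_simps)
  moreover have "0 \<le> sig\<^sup>2 * dt\<^sup>2" "0 \<le> sig ^ 4 * dt\<^sup>2" "0 \<le> sig ^ 8 * dt\<^sup>2" "0 \<le> lam\<^sup>2 * dt\<^sup>2"
    by simp_all
  ultimately show ?thesis by linarith
qed

lemma factor_powr_mean_le:
  assumes p: "\<bar>p\<bar> = sqrt dt"
  shows "integrable M (\<lambda>\<omega>. factor (dB i \<omega>) powr p)"
    and "expectation (\<lambda>\<omega>. factor (dB i \<omega>) powr p)
           \<le> 1 + p * dt * (lam - sig\<^sup>2 / 2) + as_rate_slack lam sig * dt\<^sup>2"
proof -
  define Q where "Q y = 1 + p * (factor y - 1) + (p * (p - 1) / 2 + 128 * dt) * (factor y - 1)\<^sup>2
    + 8192 * (lam ^ 4 * dt ^ 4 + sig ^ 4 * y ^ 4 + sig ^ 8 / 16 * y ^ 8 + sig ^ 8 / 16 * dt ^ 4)" for y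
  have Q: "has_bochner_integral M (\<lambda>\<omega>. Q (dB i \<omega>))
    (1 + p * (lam * dt) + (p * (p - 1) / 2 + 128 * dt) * (sig\<^sup>2 * dt + (lam\<^sup>2 + sig ^ 4 / 2) * dt\<^sup>2)
      + 8192 * (lam ^ 4 * dt ^ 4 + sig ^ 4 * (3 * dt\<^sup>2) + sig ^ 8 / 16 * (105 * dt ^ 4) + sig ^ 8 / 16 * dt ^ 4))"
    unfolding Q_def
    by (intro has_bochner_integral_add has_bochner_integral_mult_right has_bochner_integral_const
        factor_minus_1_mean factor_minus_1_square_mean dB_moments)
  have bound: "factor (dB i \<omega>) powr p \<le> Q (dB i \<omega>)" for \<omega>
    unfolding Q_def by (rule factor_powr_le[OF p])
  show int: "integrable M (\<lambda>\<omega>. factor (dB i \<omega>) powr p)"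
  proof (rule Bochner_Integration.integrable_bound[OF integrable.intros[OF Q]])
    show "(\<lambda>\<omega>. factor (dB i \<omega>) powr p) \<in> borel_measurable M" by measurable
    show "AE \<omega> in M. norm (factor (dB i \<omega>) powr p) \<le> norm (Q (dB i \<omega>))"
      using bound by (intro AE_I2) (auto intro: order_trans[OF _ abs_ge_self])
  qed
  show "expectation (\<lambda>\<omega>. factor (dB i \<omega>) powr p)
      \<le> 1 + p * dt * (lam - sig\<^sup>2 / 2) + as_rate_slack lam sig * dt\<^sup>2"
    using integral_mono[OF int integrable.intros[OF Q] bound] Q taylor_majorant_mean_le[OF p]
    by (simp add: has_bochner_integral_iff)
qed

lemma abs_milstein_eq: "\<bar>milstein lam sig x0 B dt n \<omega>\<bar> = \<bar>x0\<bar> * exp (\<Sum>i<n. ln (factor (dB i \<omega>)))"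
proof -
  have "0 < factor y" for y using factor_ge[of y] by linarith
  then show ?thesis
    by (simp add: milstein_eq_prod exp_sum abs_mult abs_prod abs_of_pos)
qed

(* With p = +-sqrt dt we have p^2 = dt, so the extra (K + 1) p in the rate pays for the slack K dt^2
   of the moment bound and for the dt^2 that Chernoff's bound needs to be summable. *)
lemma AE_eventually_log_sum_less:
  assumes p: "\<bar>p\<bar> = sqrt dt"
  shows "AE \<omega> in M. eventually (\<lambda>n. p * (\<Sum>i<n. ln (factor (dB i \<omega>)))
           < p * (real n * (dt * (lam - sig\<^sup>2 / 2 + (as_rate_slack lam sig + 1) * p)))) sequentially"
proof (rule AE_eventually_sum_less_Chernoff)
  have powr: "exp (p * ln (factor (dB i \<omega>))) = factor (dB i \<omega>) powr p" for i \<omega>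
    using factor_ge[of "dB i \<omega>"] by (simp add: powr_def mult.commute)
  show "indep_vars (\<lambda>_. borel) (\<lambda>i \<omega>. ln (factor (dB i \<omega>))) {..<n}" for n
    by (rule indep_vars_compose2[OF indep_dB]) simp
  show "integrable M (\<lambda>\<omega>. exp (p * ln (factor (dB i \<omega>))))" for i
    unfolding powr by (rule factor_powr_mean_le(1)[OF p])
  show "expectation (\<lambda>\<omega>. exp (p * ln (factor (dB i \<omega>))))
      \<le> exp (p * (dt * (lam - sig\<^sup>2 / 2 + (as_rate_slack lam sig + 1) * p)) - dt\<^sup>2)" for i
  proof -
    have dt: "dt = p\<^sup>2"
      using power2_eq_dt_if_abs_eq_sqrt[OF p] by simp
    have "expectation (\<lambda>\<omega>. exp (p * ln (factor (dB i \<omega>))))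
        \<le> 1 + (p * dt * (lam - sig\<^sup>2 / 2) + as_rate_slack lam sig * dt\<^sup>2)"
      unfolding powr using factor_powr_mean_le(2)[OF p] by (simp add: add.assoc)
    also have "\<dots> \<le> exp (p * dt * (lam - sig\<^sup>2 / 2) + as_rate_slack lam sig * dt\<^sup>2)"
      by (rule exp_ge_add_one_self)
    also have "p * dt * (lam - sig\<^sup>2 / 2) + as_rate_slack lam sig * dt\<^sup>2
        = p * (dt * (lam - sig\<^sup>2 / 2 + (as_rate_slack lam sig + 1) * p)) - dt\<^sup>2"
      unfolding dt by (simp add: algebra_simps power2_eq_square)
    finally show ?thesis .
  qed
  show "0 < dt\<^sup>2" using dt_pos by simp
qed

definition as_margin :: real where
  "as_margin = (as_rate_slack lam sig + 1) * sqrt dt"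

lemma AE_milstein_growth_bounds:
  "AE \<omega> in M. eventually (\<lambda>n.
      \<bar>x0\<bar> * exp ((lam - sig\<^sup>2 / 2 - as_margin) * (real n * dt))
        \<le> \<bar>milstein lam sig x0 B dt n \<omega>\<bar> \<and>
      \<bar>milstein lam sig x0 B dt n \<omega>\<bar>
        \<le> \<bar>x0\<bar> * exp ((lam - sig\<^sup>2 / 2 + as_margin) * (real n * dt)))
    sequentially"
proof -
  have "0 < sqrt dt" using dt_pos by simp
  then have "\<bar>sqrt dt\<bar> = sqrt dt" "\<bar>- sqrt dt\<bar> = sqrt dt" by auto
  from this[THEN AE_eventually_log_sum_less] show ?thesis
  proof eventually_elim
    case (elim \<omega>)
    from elim show ?case
    proof eventually_elim
      case (elim n)
      with \<open>0 < sqrt dt\<close>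
      have "(lam - sig\<^sup>2 / 2 - as_margin) * (real n * dt) < (\<Sum>i<n. ln (factor (dB i \<omega>)))"
        and "(\<Sum>i<n. ln (factor (dB i \<omega>))) < (lam - sig\<^sup>2 / 2 + as_margin) * (real n * dt)"
        by (simp_all add: as_margin_def mult_less_cancel_left_pos mult_ac)
      then show ?case
        unfolding abs_milstein_eq by (auto intro!: mult_left_mono simp: less_imp_le)
    qed
  qed
qed

lemma limsup_ln_abs_milstein_bounds:
  assumes "x0 \<noteq> 0"
  shows "AE \<omega> in M.
      ereal (lam - sig\<^sup>2 / 2 - as_margin)
        \<le> limsup (\<lambda>n. ereal (ln \<bar>milstein lam sig x0 B dt n \<omega>\<bar> / (real n * dt))) \<and>
      limsup (\<lambda>n. ereal (ln \<bar>milstein lam sig x0 B dt n \<omega>\<bar> / (real n * dt)))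
        \<le> ereal (lam - sig\<^sup>2 / 2 + as_margin)"
  using AE_milstein_growth_bounds
  by eventually_elim (use assms dt_pos limsup_ln_growth_rate_bounds[of "\<bar>x0\<bar>" dt] in auto)

lemma as_exp_stable_milstein:
  assumes "lam - sig\<^sup>2 / 2 + as_margin < 0"
  shows "as_exp_stable M (milstein lam sig x0 B dt) dt"
proof -
  define r where "r = lam - sig\<^sup>2 / 2 + as_margin"
  have "AE \<omega> in M. \<exists>C>0. \<forall>\<^sub>F n in sequentially. \<bar>milstein lam sig x0 B dt n \<omega>\<bar> \<le> C * exp (- (- r) * (real n * dt))"
    using AE_milstein_growth_bounds[of x0] unfolding r_def[symmetric]
  proof eventually_elim
    case (elim \<omega>)
    then show ?case
      by (intro exI[of _ "\<bar>x0\<bar> + 1"])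
        (auto elim!: eventually_mono intro: order_trans[OF _ mult_right_mono[of "\<bar>x0\<bar>" "\<bar>x0\<bar> + 1"]])
  qed
  then show ?thesis
    using assms unfolding as_exp_stable_def r_def[symmetric] by (intro exI[of _ "- r"]) auto
qed

lemma as_exp_blowup_milstein:
  assumes "x0 \<noteq> 0" and "0 < lam - sig\<^sup>2 / 2 - as_margin"
  shows "as_exp_blowup M (milstein lam sig x0 B dt) dt"
proof -
  define r where "r = lam - sig\<^sup>2 / 2 - as_margin"
  have "AE \<omega> in M. \<exists>C>0. \<forall>\<^sub>F n in sequentially. C * exp (r * (real n * dt)) \<le> \<bar>milstein lam sig x0 B dt n \<omega>\<bar>"
    using AE_milstein_growth_bounds[of x0] unfolding r_def[symmetric]
  proof eventually_elim
    case (elim \<omega>)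
    then show ?case
      using assms(1) by (intro exI[of _ "\<bar>x0\<bar>"]) (auto elim!: eventually_mono)
  qed
  then show ?thesis
    using assms(2) unfolding as_exp_blowup_def r_def[symmetric] by (intro exI[of _ r]) auto
qed

lemma limsup_ln_ms_milstein:
  assumes "x0 \<noteq> 0"
  shows "limsup (\<lambda>n. ereal (ln (sqrt (\<integral>\<omega>. \<bar>milstein lam sig x0 B dt n \<omega>\<bar>\<^sup>2 \<partial>M)) / (real n * dt)))
    = ereal ms_rate"
  using limsup_ln_growth_rate_bounds[of "\<bar>x0\<bar>" dt ms_rate "\<lambda>n. \<bar>x0\<bar> * exp (ms_rate * (real n * dt))" ms_rate]
    assms dt_pos
  unfolding ms_norm_milstein by (intro antisym) auto

lemma ms_exp_stable_milstein:
  assumes "ms_rate < 0"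
  shows "ms_exp_stable M (milstein lam sig x0 B dt) dt"
  unfolding ms_exp_stable_def ms_norm_milstein
  using assms by (intro exI[of _ "\<bar>x0\<bar> + 1"] exI[of _ "- ms_rate"]) (auto intro: mult_right_mono)

lemma ms_exp_blowup_milstein:
  assumes "x0 \<noteq> 0" and "0 < ms_rate"
  shows "ms_exp_blowup M (milstein lam sig x0 B dt) dt"
  unfolding ms_exp_blowup_def ms_norm_milstein
  using assms by (intro exI[of _ "\<bar>x0\<bar>"] exI[of _ ms_rate]) auto

end

lemma milstein_rates:
  fixes M :: "'a measure" and B :: "real \<Rightarrow> 'a \<Rightarrow> real" and lam sig x0 dt :: real
  defines "C3 \<equiv> ms_rate_const lam sig" and "C4 \<equiv> as_rate_slack lam sig + 1"
  assumes "std_brownian_motion M B" and x0: "x0 \<noteq> 0" and "0 < dt"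
    and "dt < 1" and "(\<bar>lam\<bar> + sig\<^sup>2) * dt < 1/8"
    and ms_gap: "lam + sig\<^sup>2 / 2 \<noteq> 0 \<Longrightarrow> C3 * dt < \<bar>lam + sig\<^sup>2 / 2\<bar>"
    and as_gap: "lam - sig\<^sup>2 / 2 \<noteq> 0 \<Longrightarrow> C4 * sqrt dt < \<bar>lam - sig\<^sup>2 / 2\<bar>"
  shows "ereal (lam + sig\<^sup>2 / 2 - C3 * dt)
        \<le> limsup (\<lambda>n. ereal (ln (sqrt (integral\<^sup>L M (\<lambda>\<omega>. \<bar>milstein lam sig x0 B dt n \<omega>\<bar>\<^sup>2))) / (real n * dt))) \<and>
      limsup (\<lambda>n. ereal (ln (sqrt (integral\<^sup>L M (\<lambda>\<omega>. \<bar>milstein lam sig x0 B dt n \<omega>\<bar>\<^sup>2))) / (real n * dt)))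
        \<le> ereal (lam + sig\<^sup>2 / 2 + C3 * dt) \<and>
      (AE \<omega> in M.
         ereal (lam - sig\<^sup>2 / 2 - C4 * sqrt dt)
           \<le> limsup (\<lambda>n. ereal (ln \<bar>milstein lam sig x0 B dt n \<omega>\<bar> / (real n * dt))) \<and>
         limsup (\<lambda>n. ereal (ln \<bar>milstein lam sig x0 B dt n \<omega>\<bar> / (real n * dt)))
           \<le> ereal (lam - sig\<^sup>2 / 2 + C4 * sqrt dt)) \<and>
      (lam + sig\<^sup>2 / 2 < 0 \<longrightarrow> ms_exp_stable M (milstein lam sig x0 B dt) dt) \<and>
      (lam + sig\<^sup>2 / 2 > 0 \<longrightarrow> ms_exp_blowup M (milstein lam sig x0 B dt) dt) \<and>
      (lam - sig\<^sup>2 / 2 < 0 \<longrightarrow> as_exp_stable M (milstein lam sig x0 B dt) dt) \<and>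
      (lam - sig\<^sup>2 / 2 > 0 \<longrightarrow> as_exp_blowup M (milstein lam sig x0 B dt) dt)"
proof -
  interpret milstein_grid M B dt lam sig
    using assms by unfold_locales auto
  have ms: "\<bar>ms_rate - (lam + sig\<^sup>2 / 2)\<bar> \<le> C3 * dt"
    unfolding C3_def by (rule ms_rate_approx)
  then have "ereal (lam + sig\<^sup>2 / 2 - C3 * dt) \<le> ereal ms_rate"
    and "ereal ms_rate \<le> ereal (lam + sig\<^sup>2 / 2 + C3 * dt)"
    by (simp_all add: abs_le_iff)
  moreover have "lam + sig\<^sup>2 / 2 < 0 \<longrightarrow> ms_exp_stable M (milstein lam sig x0 B dt) dt"
    using ms ms_gap by (auto simp: abs_le_iff abs_less_iff intro!: ms_exp_stable_milstein)
  moreover have "lam + sig\<^sup>2 / 2 > 0 \<longrightarrow> ms_exp_blowup M (milstein lam sig x0 B dt) dt"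
    using ms ms_gap by (auto simp: abs_le_iff abs_less_iff intro!: ms_exp_blowup_milstein[OF x0])
  moreover have "lam - sig\<^sup>2 / 2 < 0 \<longrightarrow> as_exp_stable M (milstein lam sig x0 B dt) dt"
    using as_gap by (auto simp: abs_less_iff C4_def as_margin_def intro!: as_exp_stable_milstein)
  moreover have "lam - sig\<^sup>2 / 2 > 0 \<longrightarrow> as_exp_blowup M (milstein lam sig x0 B dt) dt"
    using as_gap by (auto simp: abs_less_iff C4_def as_margin_def intro!: as_exp_blowup_milstein[OF x0])
  ultimately show ?thesis
    using limsup_ln_abs_milstein_bounds[OF x0]
    unfolding limsup_ln_ms_milstein[OF x0] C4_def as_margin_def by (intro conjI) assumption+
qed

theorem proposition3p1:
  fixes M :: "'a measure" and B :: "real \<Rightarrow> 'a \<Rightarrow> real" and lam sig x0 :: real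
  assumes "std_brownian_motion M B" and "x0 \<noteq> 0"
  shows "\<exists>dt2 C3 C4. 0 < dt2 \<and> dt2 < 1 \<and> C3 > 0 \<and> C4 > 0 \<and>
    (\<forall>dt. 0 < dt \<and> dt < dt2 \<longrightarrow>
      ereal (lam + sig\<^sup>2 / 2 - C3 * dt)
        \<le> limsup (\<lambda>n. ereal (ln (sqrt (integral\<^sup>L M (\<lambda>\<omega>. \<bar>milstein lam sig x0 B dt n \<omega>\<bar>\<^sup>2))) / (real n * dt))) \<and>
      limsup (\<lambda>n. ereal (ln (sqrt (integral\<^sup>L M (\<lambda>\<omega>. \<bar>milstein lam sig x0 B dt n \<omega>\<bar>\<^sup>2))) / (real n * dt)))
        \<le> ereal (lam + sig\<^sup>2 / 2 + C3 * dt) \<and>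
      (AE \<omega> in M.
         ereal (lam - sig\<^sup>2 / 2 - C4 * sqrt dt)
           \<le> limsup (\<lambda>n. ereal (ln \<bar>milstein lam sig x0 B dt n \<omega>\<bar> / (real n * dt))) \<and>
         limsup (\<lambda>n. ereal (ln \<bar>milstein lam sig x0 B dt n \<omega>\<bar> / (real n * dt)))
           \<le> ereal (lam - sig\<^sup>2 / 2 + C4 * sqrt dt)) \<and>
      (lam + sig\<^sup>2 / 2 < 0 \<longrightarrow> ms_exp_stable M (milstein lam sig x0 B dt) dt) \<and>
      (lam + sig\<^sup>2 / 2 > 0 \<longrightarrow> ms_exp_blowup M (milstein lam sig x0 B dt) dt) \<and>
      (lam - sig\<^sup>2 / 2 < 0 \<longrightarrow> as_exp_stable M (milstein lam sig x0 B dt) dt) \<and>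
      (lam - sig\<^sup>2 / 2 > 0 \<longrightarrow> as_exp_blowup M (milstein lam sig x0 B dt) dt))"
proof -
  have pos: "0 < ms_rate_const lam sig" "0 < as_rate_slack lam sig + 1"
    unfolding ms_rate_const_def as_rate_slack_def by (simp_all add: add_nonneg_pos)
  have vanish: "\<forall>\<^sub>F dt in at_right 0. f dt < e" if "(f \<longlongrightarrow> 0) (at_right 0)" "0 < e" for f :: "real \<Rightarrow> real" and e
    using order_tendstoD(2)[OF that] .
  have gap: "\<forall>\<^sub>F dt in at_right 0. a \<noteq> 0 \<longrightarrow> f dt < \<bar>a\<bar>" if "(f \<longlongrightarrow> 0) (at_right 0)" for f :: "real \<Rightarrow> real" and a
    by (cases "a = 0") (auto intro: vanish[OF that])
  have "\<forall>\<^sub>F dt in at_right 0. dt < 1 \<and> (\<bar>lam\<bar> + sig\<^sup>2) * dt < 1/8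
      \<and> (lam + sig\<^sup>2 / 2 \<noteq> 0 \<longrightarrow> ms_rate_const lam sig * dt < \<bar>lam + sig\<^sup>2 / 2\<bar>)
      \<and> (lam - sig\<^sup>2 / 2 \<noteq> 0 \<longrightarrow> (as_rate_slack lam sig + 1) * sqrt dt < \<bar>lam - sig\<^sup>2 / 2\<bar>)"
    (is "\<forall>\<^sub>F dt in _. ?small dt")
    by (intro eventually_conj vanish gap) (auto intro!: tendsto_eq_intros)
  then obtain b where "0 < b" and small: "\<And>dt. 0 < dt \<Longrightarrow> dt < b \<Longrightarrow> ?small dt"
    unfolding eventually_at_right_field by auto
  show ?thesis
  proof (rule exI[of _ "min b (1/2)"], rule exI[of _ "ms_rate_const lam sig"],
      rule exI[of _ "as_rate_slack lam sig + 1"], intro milstein_rates[OF assms] conjI allI impI)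
  qed (use \<open>0 < b\<close> small pos in auto)
qed

end
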